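(* Let $A\in(0,1)$, $M<0$, $Q>0$, $S>0$ and consider the planar system $$\frac{du}{d\tau}=u^2\big((u+A)(1-u)(u-M)-Qv\big),\qquad \frac{dv}{d\tau}=S(u+A)(u-v)v$$ on $\{u\ge0,\ v\ge0\}$, whose positive equilibria are the points $(u,u)$ with $u>0$ a root of $g(u)=u^3-Tu^2-Lu+AM$, where $T=1-A+M$ and $L=A(M+1)-Q-M$. Let $u^*\in(0,1)$ be a root of $g$ and $\Delta=(u^*-T)^2-4\big(u^*(u^*-T)-L\big)$. Then the positive roots of $g$ lie in $(0,1)$, and: (I) if $T\le 0$ or $L\ge 0$, then $g$ has exactly one positive root, so the system has one positive equilibrium; (II) if $T>0$ and $L<0$, then: (i) if $\Delta<0$, then $g$ has exactly one positive root, so the system has one positive equilibrium; (ii) if $\Delta\ge 0$, then $g$ has three positive roots counting multiplicity, namely $u^*$ and $u^*_\pm=\tfrac12\big(T-u^*\pm\sqrt{\Delta}\big)$, so the system has three positive equilibria counting multiplicity.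
   Context: A root $u^*\in(0,1)$ of $g$ always exists because $g(0)=AM<0<Q=g(1)$. $\Delta$ is the discriminant of the quadratic $u^2+(u^*-T)u+u^*(u^*-T)-L$, which equals $g(u)/(u-u^* )$. *)

theory Defs
  imports Complex_Main
begin

definition field_u :: "real \<Rightarrow> real \<Rightarrow> real \<Rightarrow> real \<Rightarrow> real \<Rightarrow> real" where
  "field_u A M Q u v = u^2 * ((u + A) * (1 - u) * (u - M) - Q * v)"

definition field_v :: "real \<Rightarrow> real \<Rightarrow> real \<Rightarrow> real \<Rightarrow> real" where
  "field_v A S u v = S * (u + A) * (u - v) * v"

definition pos_equilibria :: "real \<Rightarrow> real \<Rightarrow> real \<Rightarrow> real \<Rightarrow> (real \<times> real) set" where
  "pos_equilibria A M Q S =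
     {(u, v). u > 0 \<and> v > 0 \<and> field_u A M Q u v = 0 \<and> field_v A S u v = 0}"

definition T_par :: "real \<Rightarrow> real \<Rightarrow> real" where
  "T_par A M = 1 - A + M"

definition L_par :: "real \<Rightarrow> real \<Rightarrow> real \<Rightarrow> real" where
  "L_par A M Q = A * (M + 1) - Q - M"

definition gpoly :: "real \<Rightarrow> real \<Rightarrow> real \<Rightarrow> real \<Rightarrow> real" where
  "gpoly A M Q u = u^3 - T_par A M * u^2 - L_par A M Q * u + A * M"

end

theory Submission
  imports Defs "HOL-Library.Quadratic_Discriminant"
begin

(* Since g(u) = (u + A)(u - 1)(u - M) + Q u, g is positive on [1, \<infinity>), and the
   equilibrium equations force v = u and g(u) = 0. Dividing g by u - u* leaves the
   quadratic u^2 + (u* - T) u + u*(u* - T) - L, whose discriminant is \<Delta>. By Vieta,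
   two distinct positive roots a, b of g make the third root T - a - b positive
   (the product of the roots is -AM > 0), hence T > 0 and L < 0. Conversely, if T > 0
   and L < 0, all coefficients of g(x) = x^3 - T x^2 - L x + AM have signs that
   exclude roots x \<le> 0, so both roots of the quadratic are positive. *)

lemma monic_cubic_divide_root:
  fixes T L c r x :: real
  assumes "r^3 - T*r^2 - L*r + c = 0"
  shows "x^3 - T*x^2 - L*x + c = (x - r) * (x^2 + (r - T)*x + (r*(r - T) - L))"
proof -
  have "x^3 - T*x^2 - L*x + c = (x^3 - T*x^2 - L*x + c) - (r^3 - T*r^2 - L*r + c)"
    using assms by simp
  also have "\<dots> = (x - r) * (x^2 + (r - T)*x + (r*(r - T) - L))"
    by (simp add: algebra_simps power2_eq_square power3_eq_cube)
  finally show ?thesis .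
qed

lemma monic_cubic_root_pos:
  fixes T L c x :: real
  assumes "0 \<le> T" "L \<le> 0" "c < 0" "x^3 - T*x^2 - L*x + c = 0"
  shows "0 < x"
proof (rule ccontr)
  assume "\<not> 0 < x"
  then have "x^3 \<le> 0" "0 \<le> T*x^2" "0 \<le> L*x"
    using assms(1,2) by (auto simp: power3_eq_cube mult_nonneg_nonpos2 mult_nonpos_nonpos mult_le_0_iff)
  then show False using assms(3,4) by linarith
qed

lemma monic_cubic_two_pos_roots_coeffs:
  fixes T L c a b :: real
  assumes "c < 0" "0 < a" "0 < b" "a \<noteq> b"
    and "a^3 - T*a^2 - L*a + c = 0" "b^3 - T*b^2 - L*b + c = 0"
  shows "0 < T \<and> L < 0"
proof -
  define r where "r = T - a - b"
  have "b^2 + (a - T)*b + (a*(a - T) - L) = 0"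
    using monic_cubic_divide_root[OF assms(5), of b] assms(4,6) by simp
  then have L_vieta: "L = -(a*b + (a + b)*r)"
    unfolding r_def by (simp add: algebra_simps power2_eq_square)
  then have c_vieta: "c = -(a*b*r)"
    using assms(5) unfolding r_def by algebra
  have "0 < a*b*r"
    using assms(1) c_vieta by simp
  then have "0 < r"
    using assms(2,3) by (meson mult_pos_pos zero_less_mult_pos)
  then have "0 < a*b + (a + b)*r"
    using assms(2,3) by (simp add: add_pos_pos)
  then show ?thesis
    using assms(2,3) L_vieta \<open>0 < r\<close> unfolding r_def by simp
qed

lemma quadratic_factor_discrim:
  fixes b c x :: real
  assumes "0 \<le> discrim 1 b c"
  shows "x^2 + b*x + c = (x - (-b + sqrt (discrim 1 b c)) / 2) * (x - (-b - sqrt (discrim 1 b c)) / 2)"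
proof -
  have "sqrt (discrim 1 b c) ^ 2 = b^2 - 4*c"
    using assms by (simp add: discrim_def)
  then show ?thesis
    by (simp add: field_simps power2_eq_square)
qed
lemma monic_cubic_pos_roots_singleton_coeffs:
  fixes T L c r :: real
  assumes "c < 0" "0 < r" "r^3 - T*r^2 - L*r + c = 0" "T \<le> 0 \<or> 0 \<le> L"
  shows "{x. 0 < x \<and> x^3 - T*x^2 - L*x + c = 0} = {r}"
  using monic_cubic_two_pos_roots_coeffs[OF assms(1) _ assms(2) _ _ assms(3)] assms by force

lemma monic_cubic_pos_roots_singleton_discrim:
  fixes T L c r :: real
  assumes "0 < r" and root: "r^3 - T*r^2 - L*r + c = 0"
    and "discrim 1 (r - T) (r*(r - T) - L) < 0"
  shows "{x. 0 < x \<and> x^3 - T*x^2 - L*x + c = 0} = {r}"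
proof (intro set_eqI iffI)
  fix x
  assume "x \<in> {x. 0 < x \<and> x^3 - T*x^2 - L*x + c = 0}"
  then have "(x - r) * (x^2 + (r - T)*x + (r*(r - T) - L)) = 0"
    unfolding monic_cubic_divide_root[OF root] by simp
  moreover have "x^2 + (r - T)*x + (r*(r - T) - L) \<noteq> 0"
    using discriminant_negative[of 1 "r - T" _ x] assms(3) by simp
  ultimately show "x \<in> {r}"
    by simp
qed (use assms in simp)

lemma monic_cubic_three_pos_roots:
  fixes T L c r :: real
  assumes "0 \<le> T" "L \<le> 0" "c < 0" and root: "r^3 - T*r^2 - L*r + c = 0"
    and discrim_nonneg: "0 \<le> discrim 1 (r - T) (r*(r - T) - L)"
  defines "r\<^sub>1 \<equiv> (T - r + sqrt (discrim 1 (r - T) (r*(r - T) - L))) / 2"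
    and "r\<^sub>2 \<equiv> (T - r - sqrt (discrim 1 (r - T) (r*(r - T) - L))) / 2"
  shows "0 < r\<^sub>1 \<and> 0 < r\<^sub>2 \<and> (\<forall>x. x^3 - T*x^2 - L*x + c = (x - r) * (x - r\<^sub>1) * (x - r\<^sub>2))"
proof -
  have factor: "x^3 - T*x^2 - L*x + c = (x - r) * (x - r\<^sub>1) * (x - r\<^sub>2)" for x
    using monic_cubic_divide_root[OF root, of x] quadratic_factor_discrim[OF discrim_nonneg, of x]
    unfolding r\<^sub>1_def r\<^sub>2_def by (simp add: mult.assoc)
  have "0 < r\<^sub>1" "0 < r\<^sub>2"
    using monic_cubic_root_pos[OF assms(1-3)] factor by auto
  with factor show ?thesis by blast
qed

lemma gpoly_alt_def: "gpoly A M Q u = (u + A) * (u - 1) * (u - M) + Q * u"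
  unfolding gpoly_def T_par_def L_par_def
  by (simp add: algebra_simps power2_eq_square power3_eq_cube)

lemma field_u_diagonal: "field_u A M Q u u = - (u^2 * gpoly A M Q u)"
  unfolding field_u_def gpoly_alt_def by (simp add: algebra_simps)

lemma gpoly_pos_root_less_one:
  assumes "0 \<le> A" "M \<le> 1" "0 < Q" "0 < u" "gpoly A M Q u = 0"
  shows "u < 1"
proof (rule ccontr)
  assume "\<not> u < 1"
  then have "0 \<le> (u + A) * (u - 1) * (u - M)"
    using assms(1,2,4) by simp
  moreover have "0 < Q * u"
    using assms(3,4) by simp
  ultimately show False
    using assms(5) unfolding gpoly_alt_def by linarith
qed

lemma pos_equilibria_eq:
  assumes "0 \<le> A" "0 < S"
  shows "pos_equilibria A M Q S = (\<lambda>u. (u, u)) ` {u. 0 < u \<and> gpoly A M Q u = 0}"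
proof (intro set_eqI iffI)
  fix p
  assume "p \<in> pos_equilibria A M Q S"
  then obtain u v where p: "p = (u, v)" and uv: "0 < u" "0 < v"
    and fu: "field_u A M Q u v = 0" and fv: "S * (u + A) * (u - v) * v = 0"
    unfolding pos_equilibria_def field_v_def by auto
  have "u = v"
    using fv uv assms by simp
  with fu uv have "gpoly A M Q u = 0"
    by (simp add: field_u_diagonal)
  with p uv \<open>u = v\<close> show "p \<in> (\<lambda>u. (u, u)) ` {u. 0 < u \<and> gpoly A M Q u = 0}"
    by blast
qed (auto simp: pos_equilibria_def field_u_diagonal field_v_def)

theorem lemma1:
  fixes A M Q S ustar :: real
  assumes hA: "0 < A" "A < 1" and hM: "M < 0" and hQ: "Q > 0" and hS: "S > 0"
    and hu: "0 < ustar" "ustar < 1" "gpoly A M Q ustar = 0"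
  defines "T \<equiv> T_par A M" and "L \<equiv> L_par A M Q"
    and "\<Delta> \<equiv> (ustar - T_par A M)^2 - 4 * (ustar * (ustar - T_par A M) - L_par A M Q)"
  shows "(\<forall>u. u > 0 \<and> gpoly A M Q u = 0 \<longrightarrow> u < 1)
    \<and> ((T \<le> 0 \<or> L \<ge> 0) \<longrightarrow>
         card {u. u > 0 \<and> gpoly A M Q u = 0} = 1 \<and> card (pos_equilibria A M Q S) = 1)
    \<and> ((T > 0 \<and> L < 0 \<and> \<Delta> < 0) \<longrightarrow>
         card {u. u > 0 \<and> gpoly A M Q u = 0} = 1 \<and> card (pos_equilibria A M Q S) = 1)
    \<and> ((T > 0 \<and> L < 0 \<and> \<Delta> \<ge> 0) \<longrightarrow>
         (let up = (T - ustar + sqrt \<Delta>) / 2; um = (T - ustar - sqrt \<Delta>) / 2 in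
            up > 0 \<and> um > 0 \<and>
            (\<forall>x. gpoly A M Q x = (x - ustar) * (x - up) * (x - um)) \<and>
            pos_equilibria A M Q S = {(x, x) | x. x \<in> {ustar, up, um}}))"
proof -
  have AM: "A * M < 0"
    using hA hM by (simp add: mult_pos_neg)
  have g_cubic: "gpoly A M Q x = x^3 - T*x^2 - L*x + A*M" for x
    unfolding gpoly_def T_def L_def ..
  have ustar_root: "ustar^3 - T*ustar^2 - L*ustar + A*M = 0"
    using hu(3) g_cubic by simp
  have \<Delta>_discrim: "\<Delta> = discrim 1 (ustar - T) (ustar*(ustar - T) - L)"
    unfolding \<Delta>_def T_def L_def discrim_def by simp
  have equilibria: "pos_equilibria A M Q S = (\<lambda>u. (u, u)) ` {u. 0 < u \<and> gpoly A M Q u = 0}"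
    using hA hS by (simp add: pos_equilibria_eq)
  have "u < 1" if "0 < u" "gpoly A M Q u = 0" for u
    using gpoly_pos_root_less_one[of A M Q u] that hA hM hQ by simp
  moreover have "{u. 0 < u \<and> gpoly A M Q u = 0} = {ustar}" if "T \<le> 0 \<or> 0 \<le> L"
    using monic_cubic_pos_roots_singleton_coeffs[OF AM hu(1) ustar_root that]
    unfolding g_cubic .
  moreover have "{u. 0 < u \<and> gpoly A M Q u = 0} = {ustar}" if "\<Delta> < 0"
    using monic_cubic_pos_roots_singleton_discrim[OF hu(1) ustar_root] that
    unfolding g_cubic \<Delta>_discrim by simp
  moreover have "let up = (T - ustar + sqrt \<Delta>) / 2; um = (T - ustar - sqrt \<Delta>) / 2 in
            up > 0 \<and> um > 0 \<and>
            (\<forall>x. gpoly A M Q x = (x - ustar) * (x - up) * (x - um)) \<and>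
            pos_equilibria A M Q S = {(x, x) | x. x \<in> {ustar, up, um}}"
    if "0 < T" "L < 0" "0 \<le> \<Delta>"
    using monic_cubic_three_pos_roots[of T L "A*M" ustar] that AM ustar_root hu(1)
    unfolding \<Delta>_discrim g_cubic equilibria Let_def by auto
  ultimately show ?thesis
    using equilibria by auto
qed

end
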